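(* Let $M$ be a canonical dtpla with $P_M=\{\hat p_1,\dots,\hat p_n\}$ and let $N$ be a total dtop, all of whose states are reachable, with $Q_N\subseteq T_\Delta(Q_M\times P_M)^n$. Let $\varphi:Q_N\times P_M\to T_\Delta(Q_M\times P_M)$ be given by $\varphi((t_1,\dots,t_n),\hat p_i)=t_i$, and assume $\varphi(q,p)\in T_\Delta(\{\langle\bar q,p\rangle\mid\bar q\in Q_M,\rho_M(\bar q)=p\})$ for all $q\in Q_N$, $p\in P_M$. Suppose $N$ satisfies: (i) $A_N\Phi=\sqcap\{A_M(p)\Omega\mid p\in P_M\}$; (ii) for all $v\in\mathbb N_+^*$, $q\in Q_N$, $p\in P_M$: if $A_N/v=q(x_0)$ then $\varphi(q,p)=A_M(p)\Omega/v$; (iii) for all $q\in Q_N$ and $a\in\Sigma^{(k)}$: $\mathrm{rhs}_N(q,a)\Phi=\sqcap\{\mathrm{rhs}_{M,\varphi}(q,a,p_1,\dots,p_k)\Omega\mid p_1,\dots,p_k\in P_M\}$; (iv) for all $q,\bar q\in Q_N$, $a\in\Sigma^{(k)}$, $i\in[k]$, all trees $s_j\in T_\Sigma$ ($j\in[k]$, $j\neq i$) with $p_j=\delta_M(s_j)$, all $p\in P_M$ and all $v\in V_\bot(\mathrm{rhs}_N(q,a)\Phi)$: if $\mathrm{rhs}_N(q,a)/v=\bar q(x_i)$ then $\varphi(\bar q,p)=\mathrm{rhs}_{M,\varphi}(q,a,p_1,\dots,p_{i-1},p,p_{i+1},\dots,p_k)\Psi_{iM}/v$, where $\Psi_{iM}$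 is the substitution $[\tilde q(x_j)\leftarrow\tilde q_M(s_j)\mid\tilde q\in Q_M,\ j\in[k],\ j\ne i]$ followed by $\Omega$. Then $N$ is equivalent to $M$, i.e., $[\![N]\!]=[\![M]\!]$.
   Context: Trees and patterns. $T_\Delta(Z)$ is the set of trees over ranked alphabet $\Delta$ with extra nullary symbols $Z$; $t/v$ is the subtree at node $v\in\mathbb N_+^*$; $\bot$ is a special nullary symbol; $V_\bot(t)$ is the set of nodes labelled $\bot$. $\sqcap T$ is the greatest lower bound of a finite nonempty set $T$ of trees w.r.t. the order $t\sqsubseteq t'$ ($t'$ obtained from $t$ by replacing occurrences of $\bot$ by trees): the largest common prefix with $\bot$ at the highest nodes of disagreement. A $\Sigma$-context is $C\in T_\Sigma(\{\bot\})$ with exactly one $\bot$. $Q(Y)=\{q(y)\mid q\in Q,y\in Y\}$, $X=\{x_0,x_1,\dots\}$, $X_k=\{x_1,\dots,x_k\}$. Dtlas. A dtla $M$ from $\Sigma$ to $\Delta$ consists of a finite set $Q_M$ of states, a total deterministic bottom-up tree automaton with finite state set $P_M$ and transitions $\delta(a,p_1,\dots,p_k)$, extended to $\delta_M:T_\Sigma\to P_M$ ($[\![p]\!]_M=\delta_M^{-1}(p)$), axioms $A_M(p)\in T_\Delta(Q_M(\{x_0\}))$, and at most one rule $q(a(x_1\langle p_1\rangle,\dots,x_k\langle p_k\rangle))\to\mathrm{rhs}_M(q,a,p_1,\dots,p_k)\in T_\Delta(Q_M(X_k))$ per $q,a,p_1,\dots,p_k$. Semantics: $q_M(a(s_1,\dots,s_k))=\mathrm{rhs}_M(q,a,\delta_M(s_1),\dots,\delta_M(s_k))[q'(x_i)\leftarrow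 q'_M(s_i)]$, $M(s)=A_M(\delta_M(s))[q(x_0)\leftarrow q_M(s)]$. A dtop is a dtla with a single look-ahead state $\bot$; a total dtop $N$ has an axiom $A_N\in T_\Delta(Q_N(\{x_0\}))$ and, for every $q\in Q_N$, $a\in\Sigma^{(k)}$, exactly one rule $q(a(x_1,\dots,x_k))\to\mathrm{rhs}_N(q,a)\in T_\Delta(Q_N(X_k))$. A dtpla has $|P_M|\ge2$. $M(C[p])\in T_\Delta(Q_M\times P_M)$ is the output on context $C$ with the hole treated as a leaf of look-ahead state $p$ and $q_M(p)=\langle q,p\rangle$; $N(C)=N(C[\bot])$. A state is reachable if $\langle q,p\rangle$ labels a node of $M(C[p])$ for some context $C$ and $p$. $M$ is la-uniform if there is $\rho_M:Q_M\to P_M$ with domain of $[\![q]\!]_M$ equal to $[\![\rho_M(q)]\!]_M$, every $q(x_0)$ in $A_M(p)$ having $\rho_M(q)=p$, every $q'(x_i)$ in $\mathrm{rhs}_M(q,a,p_1,\dots,p_k)$ having $\rho_M(q')=p_i$, and the rule for $q,a,p_1,\dots,p_k$ existing iff $\delta(a,p_1,\dots,p_k)=\rho_M(q)$. Earliest: no state $q$ and $d\in\Delta$ such that $q(s)$ has root label $d$ for all $s$ in the domain of $[\![q]\!]$. Canonical: total, la-uniform, earliest, all states reachable, distinct states have distinct translations. For $t\in T_\Delta(Q_M(X))$, $t\Omega$ replaces each $q(x_i)$ by the leaf $\langle q,\rho_M(q)\rangle$. For $t\in T_\Delta(Q_N(X))$, $t\Phi$ replaces each $q(x_i)$ by $\bot$.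 For $q\in Q_N$, $a\in\Sigma^{(k)}$, $p_1,\dots,p_k\in P_M$ and $p=\delta(a,p_1,\dots,p_k)$: $\mathrm{rhs}_{M,\varphi}(q,a,p_1,\dots,p_k)=\varphi(q,p)[\langle\bar q,p\rangle\leftarrow\mathrm{rhs}_M(\bar q,a,p_1,\dots,p_k)\mid\bar q\in Q_M]\in T_\Delta(Q_M(X_k))$. *)

theory Defs
  imports Main
begin

text \<open>Trees over a ranked alphabet of symbols of type 'g (rank given separately),
  with extra nullary leaf symbols of type 'z (constructor Lf) and the special
  nullary symbol bottom (constructor Bot).\<close>

datatype ('g, 'z) tr = Sym 'g "('g, 'z) tr list" | Lf 'z | Bot

fun wfT :: "('g \<Rightarrow> nat) \<Rightarrow> 'g set \<Rightarrow> 'z set \<Rightarrow> ('g, 'z) tr \<Rightarrow> bool" where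
  "wfT rk D Z (Sym g ts) = (g \<in> D \<and> length ts = rk g \<and> (\<forall>t\<in>set ts. wfT rk D Z t))"
| "wfT rk D Z (Lf z) = (z \<in> Z)"
| "wfT rk D Z Bot = False"

fun wfTb :: "('g \<Rightarrow> nat) \<Rightarrow> 'g set \<Rightarrow> 'z set \<Rightarrow> ('g, 'z) tr \<Rightarrow> bool" where
  "wfTb rk D Z (Sym g ts) = (g \<in> D \<and> length ts = rk g \<and> (\<forall>t\<in>set ts. wfTb rk D Z t))"
| "wfTb rk D Z (Lf z) = (z \<in> Z)"
| "wfTb rk D Z Bot = True"

fun nbots :: "('g, 'z) tr \<Rightarrow> nat" where
  "nbots (Sym g ts) = sum_list (map nbots ts)"
| "nbots (Lf z) = 0"
| "nbots Bot = 1"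

type_synonym 'f itr = "('f, unit) tr"

definition is_context :: "('f \<Rightarrow> nat) \<Rightarrow> 'f set \<Rightarrow> 'f itr \<Rightarrow> bool" where
  "is_context rk S C \<longleftrightarrow> wfTb rk S {} C \<and> nbots C = 1"

text \<open>Subtree at node v (nodes are lists of positive naturals); None if v is not a node.\<close>
fun subt :: "('g, 'z) tr \<Rightarrow> nat list \<Rightarrow> ('g, 'z) tr option" where
  "subt t [] = Some t"
| "subt (Sym g ts) (i # v) = (if 1 \<le> i \<and> i \<le> length ts then subt (ts ! (i - 1)) v else None)"
| "subt (Lf z) (i # v) = None"
| "subt Bot (i # v) = None"

definition occurs :: "'z \<Rightarrow> ('g, 'z) tr \<Rightarrow> bool" where
  "occurs x t \<longleftrightarrow> (\<exists>v. subt t v = Some (Lf x))"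

definition Vbot :: "('g, 'z) tr \<Rightarrow> nat list set" where
  "Vbot t = {v. subt t v = Some Bot}"

inductive le_tr :: "('g, 'z) tr \<Rightarrow> ('g, 'z) tr \<Rightarrow> bool" where
  "le_tr Bot t"
| "le_tr (Lf z) (Lf z)"
| "list_all2 le_tr ts us \<Longrightarrow> le_tr (Sym g ts) (Sym g us)"

definition glb :: "('g, 'z) tr set \<Rightarrow> ('g, 'z) tr" where
  "glb T = (THE g. (\<forall>t\<in>T. le_tr g t) \<and> (\<forall>g'. (\<forall>t\<in>T. le_tr g' t) \<longrightarrow> le_tr g' g))"

fun subst :: "('g, 'z) tr \<Rightarrow> ('z \<Rightarrow> ('g, 'w) tr) \<Rightarrow> ('g, 'w) tr" where
  "subst (Sym g ts) \<sigma> = Sym g (map (\<lambda>t. subst t \<sigma>) ts)"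
| "subst (Lf z) \<sigma> = \<sigma> z"
| "subst Bot \<sigma> = Bot"

fun osubst :: "('g, 'z) tr \<Rightarrow> ('z \<Rightarrow> ('g, 'w) tr option) \<Rightarrow> ('g, 'w) tr option" where
  "osubst (Sym g ts) \<sigma> = (let rs = map (\<lambda>t. osubst t \<sigma>) ts in
      if None \<in> set rs then None else Some (Sym g (map the rs)))"
| "osubst (Lf z) \<sigma> = \<sigma> z"
| "osubst Bot \<sigma> = Some Bot"

definition Phi :: "('g, 'z) tr \<Rightarrow> ('g, 'w) tr" where
  "Phi t = subst t (\<lambda>_. Bot)"

text \<open>A leaf (q, i) of an axiom / right-hand side stands for q(x_i).\<close>
record ('f, 'g, 'q, 'p) dtla =
  Qs :: "'q set"
  Ps :: "'p set"
  dl :: "'f \<Rightarrow> 'p list \<Rightarrow> 'p"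
  ax :: "'p \<Rightarrow> ('g, 'q \<times> nat) tr"
  rl :: "'q \<Rightarrow> 'f \<Rightarrow> 'p list \<Rightarrow> ('g, 'q \<times> nat) tr option"

definition is_dtla :: "('f \<Rightarrow> nat) \<Rightarrow> 'f set \<Rightarrow> ('g \<Rightarrow> nat) \<Rightarrow> 'g set
    \<Rightarrow> ('f, 'g, 'q, 'p) dtla \<Rightarrow> bool" where
  "is_dtla rk S rkD D M \<longleftrightarrow>
     finite (Qs M) \<and> finite (Ps M) \<and> Ps M \<noteq> {} \<and>
     (\<forall>a\<in>S. \<forall>ps. length ps = rk a \<and> set ps \<subseteq> Ps M \<longrightarrow> dl M a ps \<in> Ps M) \<and>
     (\<forall>p\<in>Ps M. wfT rkD D (Qs M \<times> {0}) (ax M p)) \<and>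
     (\<forall>q a ps t. rl M q a ps = Some t \<longrightarrow>
        q \<in> Qs M \<and> a \<in> S \<and> length ps = rk a \<and> set ps \<subseteq> Ps M \<and>
        wfT rkD D (Qs M \<times> {1..rk a}) t)"

text \<open>Run of the look-ahead automaton; the hole bottom (of a context) gets look-ahead state hp.\<close>
fun dlt :: "('f, 'g, 'q, 'p) dtla \<Rightarrow> 'p \<Rightarrow> 'f itr \<Rightarrow> 'p" where
  "dlt M hp (Sym a ss) = dl M a (map (dlt M hp) ss)"
| "dlt M hp (Lf z) = undefined"
| "dlt M hp Bot = hp"

text \<open>q_M(t); the hole bottom is translated by state q into hq q.\<close>
fun qev :: "('f, 'g, 'q, 'p) dtla \<Rightarrow> 'p \<Rightarrow> ('q \<Rightarrow> ('g, 'w) tr) \<Rightarrow> 'q \<Rightarrow> 'f itr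
    \<Rightarrow> ('g, 'w) tr option" where
  "qev M hp hq q (Sym a ss) =
     (case rl M q a (map (dlt M hp) ss) of
        None \<Rightarrow> None
      | Some t \<Rightarrow> osubst t (\<lambda>x. if 0 < snd x \<and> snd x \<le> length ss
                 then (map (\<lambda>s q'. qev M hp hq q' s) ss ! (snd x - 1)) (fst x) else None))"
| "qev M hp hq q (Lf z) = None"
| "qev M hp hq q Bot = Some (hq q)"

definition semMc :: "('f, 'g, 'q, 'p) dtla \<Rightarrow> 'p \<Rightarrow> ('q \<Rightarrow> ('g, 'w) tr) \<Rightarrow> 'f itr
    \<Rightarrow> ('g, 'w) tr option" where
  "semMc M hp hq t = osubst (ax M (dlt M hp t)) (\<lambda>x. qev M hp hq (fst x) t)"

definition deltaM :: "('f, 'g, 'q, 'p) dtla \<Rightarrow> 'f itr \<Rightarrow> 'p" where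
  "deltaM M s = dlt M undefined s"

definition qsem :: "('f, 'g, 'q, 'p) dtla \<Rightarrow> 'q \<Rightarrow> 'f itr \<Rightarrow> ('g, 'w) tr option" where
  "qsem M q s = qev M undefined (\<lambda>_. Bot) q s"

definition transM :: "('f, 'g, 'q, 'p) dtla \<Rightarrow> 'f itr \<Rightarrow> ('g, unit) tr option" where
  "transM M s = semMc M undefined (\<lambda>_. Bot) s"

text \<open>M(C[p]) : output on a context with the hole as a leaf of look-ahead p, q_M(hole) = <q,p>.\<close>
definition ctxM :: "('f, 'g, 'q, 'p) dtla \<Rightarrow> 'f itr \<Rightarrow> 'p \<Rightarrow> ('g, 'q \<times> 'p) tr option" where
  "ctxM M C p = semMc M p (\<lambda>q. Lf (q, p)) C"

definition la_uniform :: "('f \<Rightarrow> nat) \<Rightarrow> 'f set \<Rightarrow> ('f, 'g, 'q, 'p) dtla \<Rightarrow> ('q \<Rightarrow> 'p) \<Rightarrow> bool" where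
  "la_uniform rk S M rho \<longleftrightarrow>
     (\<forall>q\<in>Qs M. rho q \<in> Ps M) \<and>
     (\<forall>q\<in>Qs M. {s. wfT rk S {} s \<and> (qsem M q s :: ('g, unit) tr option) \<noteq> None}
                = {s. wfT rk S {} s \<and> deltaM M s = rho q}) \<and>
     (\<forall>p\<in>Ps M. \<forall>q i. occurs (q, i) (ax M p) \<longrightarrow> rho q = p) \<and>
     (\<forall>q a ps t. rl M q a ps = Some t \<longrightarrow>
        (\<forall>q' i. occurs (q', i) t \<longrightarrow> rho q' = ps ! (i - 1))) \<and>
     (\<forall>q\<in>Qs M. \<forall>a\<in>S. \<forall>ps. length ps = rk a \<and> set ps \<subseteq> Ps M \<longrightarrow>
        (rl M q a ps \<noteq> None \<longleftrightarrow> dl M a ps = rho q))"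

definition total_dtla :: "('f \<Rightarrow> nat) \<Rightarrow> 'f set \<Rightarrow> ('f, 'g, 'q, 'p) dtla \<Rightarrow> bool" where
  "total_dtla rk S M \<longleftrightarrow> (\<forall>s. wfT rk S {} s \<longrightarrow> transM M s \<noteq> None)"

definition earliest :: "('f \<Rightarrow> nat) \<Rightarrow> 'f set \<Rightarrow> 'g set \<Rightarrow> ('f, 'g, 'q, 'p) dtla \<Rightarrow> bool" where
  "earliest rk S D M \<longleftrightarrow>
     \<not> (\<exists>q\<in>Qs M. \<exists>d\<in>D. \<forall>s. wfT rk S {} s \<and> (qsem M q s :: ('g, unit) tr option) \<noteq> None
          \<longrightarrow> (\<exists>ts. qsem M q s = (Some (Sym d ts) :: ('g, unit) tr option)))"

definition all_reachable :: "('f \<Rightarrow> nat) \<Rightarrow> 'f set \<Rightarrow> ('f, 'g, 'q, 'p) dtla \<Rightarrow> bool" where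
  "all_reachable rk S M \<longleftrightarrow>
     (\<forall>q\<in>Qs M. \<exists>C p t. is_context rk S C \<and> p \<in> Ps M \<and> ctxM M C p = Some t \<and> occurs (q, p) t)"

definition distinct_translations :: "('f \<Rightarrow> nat) \<Rightarrow> 'f set \<Rightarrow> ('f, 'g, 'q, 'p) dtla \<Rightarrow> bool" where
  "distinct_translations rk S M \<longleftrightarrow>
     (\<forall>q1\<in>Qs M. \<forall>q2\<in>Qs M. q1 \<noteq> q2 \<longrightarrow>
        (\<exists>s. wfT rk S {} s \<and> (qsem M q1 s :: ('g, unit) tr option) \<noteq> qsem M q2 s))"

text \<open>Canonical dtla, with rho the function witnessing la-uniformity.\<close>
definition canonical :: "('f \<Rightarrow> nat) \<Rightarrow> 'f set \<Rightarrow> ('g \<Rightarrow> nat) \<Rightarrow> 'g set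
    \<Rightarrow> ('f, 'g, 'q, 'p) dtla \<Rightarrow> ('q \<Rightarrow> 'p) \<Rightarrow> bool" where
  "canonical rk S rkD D M rho \<longleftrightarrow>
     is_dtla rk S rkD D M \<and> total_dtla rk S M \<and> la_uniform rk S M rho \<and>
     earliest rk S D M \<and> all_reachable rk S M \<and> distinct_translations rk S M"

definition is_dtpla :: "('f \<Rightarrow> nat) \<Rightarrow> 'f set \<Rightarrow> ('g \<Rightarrow> nat) \<Rightarrow> 'g set
    \<Rightarrow> ('f, 'g, 'q, 'p) dtla \<Rightarrow> bool" where
  "is_dtpla rk S rkD D M \<longleftrightarrow> is_dtla rk S rkD D M \<and> card (Ps M) \<ge> 2"

definition Omega :: "('q \<Rightarrow> 'p) \<Rightarrow> ('g, 'q \<times> nat) tr \<Rightarrow> ('g, 'q \<times> 'p) tr" where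
  "Omega rho t = subst t (\<lambda>x. Lf (fst x, rho (fst x)))"

definition rhsMphi :: "('f, 'g, 'q, 'p) dtla \<Rightarrow> ('r \<Rightarrow> 'p \<Rightarrow> ('g, 'q \<times> 'p) tr)
    \<Rightarrow> 'r \<Rightarrow> 'f \<Rightarrow> 'p list \<Rightarrow> ('g, 'q \<times> nat) tr" where
  "rhsMphi M phi q a ps = subst (phi q (dl M a ps)) (\<lambda>x. the (rl M (fst x) a ps))"

record ('f, 'g, 'r) dtop =
  QN :: "'r set"
  axN :: "('g, 'r \<times> nat) tr"
  rlN :: "'r \<Rightarrow> 'f \<Rightarrow> ('g, 'r \<times> nat) tr"

definition is_total_dtop :: "('f \<Rightarrow> nat) \<Rightarrow> 'f set \<Rightarrow> ('g \<Rightarrow> nat) \<Rightarrow> 'g set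
    \<Rightarrow> ('f, 'g, 'r) dtop \<Rightarrow> bool" where
  "is_total_dtop rk S rkD D N \<longleftrightarrow>
     finite (QN N) \<and> wfT rkD D (QN N \<times> {0}) (axN N) \<and>
     (\<forall>q\<in>QN N. \<forall>a\<in>S. wfT rkD D (QN N \<times> {1..rk a}) (rlN N q a))"

fun qevN :: "('f, 'g, 'r) dtop \<Rightarrow> ('r \<Rightarrow> ('g, 'w) tr) \<Rightarrow> 'r \<Rightarrow> 'f itr \<Rightarrow> ('g, 'w) tr" where
  "qevN N hq q (Sym a ss) =
     subst (rlN N q a) (\<lambda>x. if 0 < snd x \<and> snd x \<le> length ss
        then (map (\<lambda>s q'. qevN N hq q' s) ss ! (snd x - 1)) (fst x) else Bot)"
| "qevN N hq q (Lf z) = Bot"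
| "qevN N hq q Bot = hq q"

definition semNc :: "('f, 'g, 'r) dtop \<Rightarrow> ('r \<Rightarrow> ('g, 'w) tr) \<Rightarrow> 'f itr \<Rightarrow> ('g, 'w) tr" where
  "semNc N hq t = subst (axN N) (\<lambda>x. qevN N hq (fst x) t)"

definition transN :: "('f, 'g, 'r) dtop \<Rightarrow> 'f itr \<Rightarrow> ('g, unit) tr option" where
  "transN N s = Some (semNc N (\<lambda>_. Bot) s)"

text \<open>N(C): hole translated by state q into the leaf <q, bottom>, represented as Lf q.\<close>
definition all_reachableN :: "('f \<Rightarrow> nat) \<Rightarrow> 'f set \<Rightarrow> ('f, 'g, 'r) dtop \<Rightarrow> bool" where
  "all_reachableN rk S N \<longleftrightarrow>
     (\<forall>q\<in>QN N. \<exists>C. is_context rk S C \<and> occurs q (semNc N Lf C))"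

end

theory Submission
  imports Defs
begin

text \<open>Each state q of N encodes the tuple of trees phi(q, -), one candidate output of M for every
  look-ahead state. By induction on the input s, the state q of N translates s into
  phi(q, delta_M(s)) with every leaf <q', p> replaced by q'_M(s). In the induction step,
  condition (iii) makes the right-hand side of N, with its state leaves cut off, a prefix of the
  right-hand side of M that is actually applied; at each cut-off leaf (q', i), condition (iv)
  together with the induction hypothesis for the i-th subtree supplies exactly the missing part.
  Conditions (i) and (ii) give the same argument at the root.\<close>

section \<open>The prefix order and greatest lower bounds\<close>

lemma le_tr_refl: "le_tr t t"
  by (induction t) (auto intro: le_tr.intros list.rel_refl_strong)

lemma le_tr_Sym_iff: "le_tr (Sym g hs) t \<longleftrightarrow> (\<exists>us. t = Sym g us \<and> list_all2 le_tr hs us)"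
  by (auto elim: le_tr.cases intro: le_tr.intros)

lemma le_tr_Lf_iff: "le_tr (Lf z) t \<longleftrightarrow> t = Lf z"
  by (auto elim: le_tr.cases intro: le_tr.intros)

lemma le_tr_Bot_iff: "le_tr t Bot \<longleftrightarrow> t = Bot"
  by (auto elim: le_tr.cases intro: le_tr.intros)

lemma le_tr_antisym: "le_tr a b \<Longrightarrow> le_tr b a \<Longrightarrow> a = b"
proof (induction rule: le_tr.induct)
  case (3 ts us g)
  then have "list_all2 le_tr us ts" by (simp add: le_tr_Sym_iff)
  with 3(1) have "ts = us"
    by (induction ts arbitrary: us) (auto simp: list_all2_Cons1)
  then show ?case by simp
qed (auto simp: le_tr_Bot_iff)

text \<open>Descending along one member t0 of T computes the greatest lower bound of T; this shows that
  the description in glb is well defined.\<close>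

fun children :: "('g, 'z) tr \<Rightarrow> ('g, 'z) tr list" where
  "children (Sym g us) = us"
| "children _ = []"

function glb_along :: "('g, 'z) tr set \<Rightarrow> ('g, 'z) tr \<Rightarrow> ('g, 'z) tr" where
  "glb_along T (Sym g ts) =
     (if \<forall>t\<in>T. \<exists>us. t = Sym g us \<and> length us = length ts
      then Sym g (map (\<lambda>j. glb_along ((\<lambda>t. children t ! j) ` T) (ts ! j)) [0..<length ts])
      else Bot)"
| "glb_along T (Lf z) = (if \<forall>t\<in>T. t = Lf z then Lf z else Bot)"
| "glb_along T Bot = Bot"
  by pat_completeness auto
termination
  by (relation "measure (size \<circ> snd)")
    (auto simp: less_Suc_eq_le intro!: size_list_estimation'[OF nth_mem])

lemma glb_along_lower: "t0 \<in> T \<Longrightarrow> t \<in> T \<Longrightarrow> le_tr (glb_along T t0) t"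
proof (induction T t0 arbitrary: t rule: glb_along.induct)
  case (1 T g ts)
  show ?case
  proof (cases "\<forall>t\<in>T. \<exists>us. t = Sym g us \<and> length us = length ts")
    case True
    with "1.prems" obtain us where t: "t = Sym g us" "length us = length ts" by blast
    have "le_tr (glb_along ((\<lambda>t. children t ! j) ` T) (ts ! j)) (us ! j)" if "j < length ts" for j
    proof (rule "1.IH"[OF True])
      show "ts ! j \<in> (\<lambda>t. children t ! j) ` T" by (rule image_eqI[OF _ "1.prems"(1)]) simp
      show "us ! j \<in> (\<lambda>t. children t ! j) ` T" by (rule image_eqI[OF _ "1.prems"(2)]) (simp add: t)
    qed (simp add: that)
    then have "list_all2 le_tr (map (\<lambda>j. glb_along ((\<lambda>t. children t ! j) ` T) (ts ! j)) [0..<length ts]) us"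
      using t(2) by (auto intro: list_all2_all_nthI)
    then show ?thesis by (simp only: glb_along.simps if_P[OF True] t(1) le_tr.intros)
  next
    case False
    then show ?thesis by (simp only: glb_along.simps if_False le_tr.intros)
  qed
next
  case (2 T z)
  show ?case
  proof (cases "\<forall>t\<in>T. t = Lf z")
    case True
    then have "t = Lf z" using "2.prems"(2) by blast
    then show ?thesis unfolding glb_along.simps(2) if_P[OF True] by (simp only: le_tr_refl)
  qed (simp only: glb_along.simps if_False le_tr.intros)
qed (simp add: le_tr.intros)

lemma glb_along_greatest: "t0 \<in> T \<Longrightarrow> \<forall>t\<in>T. le_tr g' t \<Longrightarrow> le_tr g' (glb_along T t0)"
proof (induction T t0 arbitrary: g' rule: glb_along.induct)
  case (1 T g ts)
  have "le_tr g' (Sym g ts)" using "1.prems" by blast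
  then consider "g' = Bot" | hs where "g' = Sym g hs" "list_all2 le_tr hs ts"
    by (cases rule: le_tr.cases) auto
  then show ?case
  proof cases
    case 2
    have above: "\<exists>us. t = Sym g us \<and> list_all2 le_tr hs us" if "t \<in> T" for t
      using "1.prems"(2) that 2(1) by (simp add: le_tr_Sym_iff)
    then have shape: "\<forall>t\<in>T. \<exists>us. t = Sym g us \<and> length us = length ts"
      using 2(2) by (metis list_all2_lengthD)
    have "le_tr (hs ! j) (glb_along ((\<lambda>t. children t ! j) ` T) (ts ! j))" if "j < length ts" for j
    proof (rule "1.IH"[OF shape])
      show "\<forall>u\<in>(\<lambda>t. children t ! j) ` T. le_tr (hs ! j) u"
        using above that 2(2) by (fastforce dest: list_all2_nthD list_all2_lengthD)
    qed (use that "1.prems"(1) in \<open>force intro: image_eqI\<close>)+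
    then have "list_all2 le_tr hs (map (\<lambda>j. glb_along ((\<lambda>t. children t ! j) ` T) (ts ! j)) [0..<length ts])"
      using list_all2_lengthD[OF 2(2)] by (simp add: list_all2_conv_all_nth)
    then show ?thesis by (simp only: glb_along.simps if_P[OF shape] 2(1) le_tr.intros)
  qed (simp only: le_tr.intros)
next
  case (2 T z)
  then have "g' = Bot \<or> g' = Lf z" by (auto elim: le_tr.cases)
  then show ?case
  proof
    assume g': "g' = Lf z"
    with "2.prems"(2) have all: "\<forall>t\<in>T. t = Lf z" by (simp add: le_tr_Lf_iff)
    show ?thesis unfolding g' glb_along.simps(2) if_P[OF all] by (rule le_tr_refl)
  qed (simp only: le_tr.intros)
next
  case (3 T)
  then have "le_tr g' Bot" by blast
  then show ?case by (simp add: le_tr_Bot_iff)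
qed

lemma glb_eq_glb_along:
  assumes "t0 \<in> T"
  shows "glb T = glb_along T t0"
  unfolding glb_def
proof (rule the_equality)
  show "(\<forall>t\<in>T. le_tr (glb_along T t0) t) \<and> (\<forall>g'. (\<forall>t\<in>T. le_tr g' t) \<longrightarrow> le_tr g' (glb_along T t0))"
    using glb_along_lower[OF assms] glb_along_greatest[OF assms] by blast
next
  fix g
  assume "(\<forall>t\<in>T. le_tr g t) \<and> (\<forall>g'. (\<forall>t\<in>T. le_tr g' t) \<longrightarrow> le_tr g' g)"
  then have "le_tr g (glb_along T t0)" "le_tr (glb_along T t0) g"
    using glb_along_lower[OF assms] glb_along_greatest[OF assms] by blast+
  then show "g = glb_along T t0" by (rule le_tr_antisym)
qed

lemma glb_lower: "t \<in> T \<Longrightarrow> le_tr (glb T) t"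
  by (simp add: glb_eq_glb_along glb_along_lower)

section \<open>Leaves and substitution\<close>

lemma subt_Lf_iff: "subt (Lf z) v = Some t \<longleftrightarrow> v = [] \<and> t = Lf z"
  by (cases v) auto

lemma subt_Bot_iff: "subt Bot v = Some t \<longleftrightarrow> v = [] \<and> t = Bot"
  by (cases v) auto

lemma occurs_iff_set2_tr: "occurs x t \<longleftrightarrow> x \<in> set2_tr t"
proof (induction t)
  case (Sym g ts)
  have "occurs x (Sym g ts) \<longleftrightarrow> (\<exists>t\<in>set ts. occurs x t)"
  proof
    assume "occurs x (Sym g ts)"
    then obtain i v where "subt (Sym g ts) (i # v) = Some (Lf x)"
      unfolding occurs_def by (metis neq_Nil_conv option.inject subt.simps(1) tr.distinct(1))
    then have "i - 1 < length ts" "occurs x (ts ! (i - 1))"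
      by (auto simp: occurs_def split: if_splits)
    then show "\<exists>t\<in>set ts. occurs x t" by (meson nth_mem)
  next
    assume "\<exists>t\<in>set ts. occurs x t"
    then obtain t v where "t \<in> set ts" "subt t v = Some (Lf x)" unfolding occurs_def by blast
    moreover from this(1) obtain j where "j < length ts" "ts ! j = t" by (auto simp: in_set_conv_nth)
    ultimately have "subt (Sym g ts) (Suc j # v) = Some (Lf x)" by simp
    then show "occurs x (Sym g ts)" unfolding occurs_def ..
  qed
  with Sym.IH show ?case by simp
qed (auto simp: occurs_def subt_Lf_iff subt_Bot_iff)

lemma set2_tr_subst: "set2_tr (subst t \<sigma>) = (\<Union>x\<in>set2_tr t. set2_tr (\<sigma> x))"
  by (induction t) auto

lemma wfT_set2_tr: "wfT rk D Z t \<Longrightarrow> set2_tr t \<subseteq> Z"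
  by (induction t) auto

lemma subst_cong: "(\<And>x. x \<in> set2_tr t \<Longrightarrow> \<sigma> x = \<sigma>' x) \<Longrightarrow> subst t \<sigma> = subst t \<sigma>'"
  by (induction t) auto

lemma subst_subst: "subst (subst t \<sigma>) \<tau> = subst t (\<lambda>x. subst (\<sigma> x) \<tau>)"
  by (induction t) auto

lemma subt_subst: "subt t v = Some u \<Longrightarrow> subt (subst t \<sigma>) v = Some (subst u \<sigma>)"
proof (induction t v rule: subt.induct)
  case (2 g ts i v)
  then show ?case by (auto split: if_splits)
qed simp_all

lemma osubst_eq:
  "osubst t \<rho> = (if \<forall>x\<in>set2_tr t. \<rho> x \<noteq> None then Some (subst t (\<lambda>x. the (\<rho> x))) else None)"
proof (induction t)
  case (Sym g ts)
  show ?case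
  proof (cases "\<forall>x\<in>set2_tr (Sym g ts). \<rho> x \<noteq> None")
    case True
    with Sym.IH have "map (\<lambda>t. osubst t \<rho>) ts = map (\<lambda>t. Some (subst t (\<lambda>x. the (\<rho> x)))) ts"
      by auto
    with True show ?thesis by (simp add: Let_def comp_def image_iff)
  next
    case False
    then obtain t where "t \<in> set ts" "\<not> (\<forall>x\<in>set2_tr t. \<rho> x \<noteq> None)" by auto
    with Sym.IH have "osubst t \<rho> = None" by auto
    with \<open>t \<in> set ts\<close> have "None \<in> set (map (\<lambda>t. osubst t \<rho>) ts)" by (metis image_eqI set_map)
    with False show ?thesis by (simp only: osubst.simps Let_def if_True if_False)
  qed
qed auto

lemma osubst_eq_Some: "(\<And>x. x \<in> set2_tr t \<Longrightarrow> \<rho> x = Some (\<sigma> x)) \<Longrightarrow> osubst t \<rho> = Some (subst t \<sigma>)"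
  by (auto simp: osubst_eq intro: subst_cong)

lemma osubst_map_option:
  "osubst t (\<lambda>x. map_option (\<lambda>u. subst u \<sigma>) (\<rho> x)) = map_option (\<lambda>u. subst u \<sigma>) (osubst t \<rho>)"
  by (auto simp: osubst_eq subst_subst option.map_sel intro: subst_cong)

lemma Phi_simps [simp]:
  "Phi (Sym g ts) = Sym g (map Phi ts)"
  "Phi (Lf z) = Bot"
  "Phi Bot = Bot"
  by (simp_all add: Phi_def)

lemma Vbot_Phi_if_leaf: "subt R v = Some (Lf x) \<Longrightarrow> v \<in> Vbot (Phi R)"
  unfolding Vbot_def Phi_def by (drule subt_subst) simp

text \<open>Phi R has no leaves, so only the Sym nodes of the upper tree matter, and substituting
  leaves for leaves does not change them.\<close>
lemma Phi_le_subst_relabel: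
  "le_tr (Phi R) (subst T \<sigma>) \<Longrightarrow> (\<And>x. \<exists>z. \<sigma> x = Lf z) \<Longrightarrow> le_tr (Phi R) (subst T \<sigma>')"
proof (induction R arbitrary: T)
  case (Sym g rs)
  from Sym.prems(1) obtain us where us: "subst T \<sigma> = Sym g us" "list_all2 le_tr (map Phi rs) us"
    by (auto simp: le_tr_Sym_iff)
  with Sym.prems(2) obtain ts where T: "T = Sym g ts"
    by (cases T) (auto, metis tr.distinct(1))
  with us have "list_all2 (\<lambda>r t. le_tr (Phi r) (subst t \<sigma>)) rs ts"
    by (auto simp: list_all2_map1 list_all2_map2)
  then have "list_all2 (\<lambda>r t. le_tr (Phi r) (subst t \<sigma>')) rs ts"
    by (rule list.rel_mono_strong) (use Sym in blast)
  with T show ?case by (simp add: le_tr_Sym_iff list_all2_map1 list_all2_map2)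
qed (simp_all add: le_tr.intros)

lemma subst_eq_if_Phi_le:
  assumes "wfT rk D Z R" "le_tr (Phi R) T"
    and "\<And>v x. subt R v = Some (Lf x) \<Longrightarrow> subt T v = Some (\<sigma> x)"
  shows "subst R \<sigma> = T"
  using assms
proof (induction R arbitrary: T)
  case (Sym g rs)
  from Sym.prems(2) obtain us where us: "T = Sym g us" "list_all2 le_tr (map Phi rs) us"
    by (auto simp: le_tr_Sym_iff)
  have "subst (rs ! j) \<sigma> = us ! j" if j: "j < length rs" for j
  proof (rule Sym.IH)
    show "rs ! j \<in> set rs" "wfT rk D Z (rs ! j)" using Sym.prems(1) j by auto
    show "le_tr (Phi (rs ! j)) (us ! j)" using list_all2_nthD[OF us(2)] j by simp
    fix v x
    assume "subt (rs ! j) v = Some (Lf x)"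
    then have "subt T (Suc j # v) = Some (\<sigma> x)" using j by (intro Sym.prems(3)) simp
    then show "subt (us ! j) v = Some (\<sigma> x)" using us j list_all2_lengthD by fastforce
  qed
  moreover have "length rs = length us" using list_all2_lengthD[OF us(2)] by simp
  ultimately have "map (\<lambda>t. subst t \<sigma>) rs = us" by (auto intro: nth_equalityI)
  with us show ?case by simp
next
  case (Lf z)
  from Lf.prems(3)[of "[]" z] show ?case by simp
qed simp

lemma subst_eq_if_Phi_le_Omega:
  assumes "wfT rk D Z R" "le_tr (Phi R) (Omega rho T)"
    and "\<And>v x. subt R v = Some (Lf x) \<Longrightarrow> subt (subst T \<tau>) v = Some (\<sigma> x)"
  shows "subst R \<sigma> = subst T \<tau>"
proof (rule subst_eq_if_Phi_le[OF assms(1) _ assms(3)])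
  show "le_tr (Phi R) (subst T \<tau>)"
    using assms(2) unfolding Omega_def by (rule Phi_le_subst_relabel) blast
qed

section \<open>Semantics of dtlas\<close>

lemma deltaM_Sym [simp]: "deltaM M (Sym a ss) = dl M a (map (deltaM M) ss)"
  unfolding deltaM_def by simp

lemma deltaM_in_Ps: "is_dtla rk S rkD D M \<Longrightarrow> wfT rk S {} s \<Longrightarrow> deltaM M s \<in> Ps M"
proof (induction s)
  case (Sym a ss)
  then have "set (map (deltaM M) ss) \<subseteq> Ps M" by auto
  with Sym.prems show ?case unfolding is_dtla_def by simp
qed simp_all

lemma qev_subst_hole:
  "qev M hp (\<lambda>q. subst (hq q) \<sigma>) q s = map_option (\<lambda>t. subst t \<sigma>) (qev M hp hq q s)"
proof (induction s arbitrary: q)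
  case (Sym a ss)
  have "(\<lambda>x. if 0 < snd x \<and> snd x \<le> length ss
          then (map (\<lambda>s q'. qev M hp (\<lambda>q. subst (hq q) \<sigma>) q' s) ss ! (snd x - 1)) (fst x) else None)
      = (\<lambda>x. map_option (\<lambda>t. subst t \<sigma>) (if 0 < snd x \<and> snd x \<le> length ss
          then (map (\<lambda>s q'. qev M hp hq q' s) ss ! (snd x - 1)) (fst x) else None))"
    using Sym.IH by (auto simp: fun_eq_iff)
  then show ?case by (simp add: osubst_map_option split: option.split)
qed simp_all

text \<open>The output of qsem contains no leaves, so its leaf type is immaterial.\<close>
lemma qsem_retype:
  "(qsem M q s :: ('g, 'w) tr option) = map_option (\<lambda>t. subst t \<sigma>) (qsem M q s :: ('g, 'v) tr option)"
  using qev_subst_hole[of M undefined "\<lambda>_. Bot" \<sigma> q s] by (simp add: qsem_def)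

lemma subst_the_qsem:
  "(qsem M q s :: ('g, 'v) tr option) \<noteq> None \<Longrightarrow>
   subst (the (qsem M q s :: ('g, 'v) tr option)) \<sigma> = (the (qsem M q s) :: ('g, 'w) tr)"
  by (auto simp: qsem_retype[where 'v = 'v and \<sigma> = \<sigma>] option.map_sel)

lemma qsem_defined:
  "la_uniform rk S M rho \<Longrightarrow> q \<in> Qs M \<Longrightarrow> wfT rk S {} s \<Longrightarrow> deltaM M s = rho q \<Longrightarrow>
   (qsem M q s :: ('g, 'w) tr option) \<noteq> None"
  unfolding la_uniform_def
  using qsem_retype[of M q s "\<lambda>_::unit. Bot :: ('g, 'w) tr"] by auto

lemma rl_exists:
  "la_uniform rk S M rho \<Longrightarrow> q \<in> Qs M \<Longrightarrow> a \<in> S \<Longrightarrow> length ps = rk a \<Longrightarrow> set ps \<subseteq> Ps M \<Longrightarrow>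
   dl M a ps = rho q \<Longrightarrow> \<exists>t. rl M q a ps = Some t"
  unfolding la_uniform_def by blast

lemma rl_leaf:
  assumes "is_dtla rk S rkD D M" "la_uniform rk S M rho" "rl M q a ps = Some t" "y \<in> set2_tr t"
  shows "fst y \<in> Qs M \<and> snd y \<in> {1..rk a} \<and> rho (fst y) = ps ! (snd y - 1)"
proof -
  have "wfT rkD D (Qs M \<times> {1..rk a}) t" using assms(1,3) unfolding is_dtla_def by blast
  with assms(4) have "y \<in> Qs M \<times> {1..rk a}" by (auto dest: wfT_set2_tr)
  moreover have "\<forall>q' i. occurs (q', i) t \<longrightarrow> rho q' = ps ! (i - 1)"
    using assms(2,3) unfolding la_uniform_def by blast
  then have "rho (fst y) = ps ! (snd y - 1)"
    using assms(4) by (cases y) (simp add: occurs_iff_set2_tr)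
  ultimately show ?thesis by auto
qed

lemma ax_leaf:
  assumes "is_dtla rk S rkD D M" "la_uniform rk S M rho" "p \<in> Ps M" "y \<in> set2_tr (ax M p)"
  shows "fst y \<in> Qs M \<and> rho (fst y) = p"
proof -
  have wf: "wfT rkD D (Qs M \<times> {0}) (ax M p)" using assms(1,3) unfolding is_dtla_def by blast
  have la: "\<forall>q i. occurs (q, i) (ax M p) \<longrightarrow> rho q = p"
    using assms(2,3) unfolding la_uniform_def by blast
  from wfT_set2_tr[OF wf] assms(4) have "fst y \<in> Qs M" by auto
  moreover from la assms(4) have "rho (fst y) = p" by (cases y) (auto simp: occurs_iff_set2_tr)
  ultimately show ?thesis ..
qed

lemma qsem_Sym:
  assumes dtla: "is_dtla rk S rkD D M" and lau: "la_uniform rk S M rho"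
    and q: "q \<in> Qs M" and a: "a \<in> S" and len: "length ss = rk a"
    and wf: "\<forall>s\<in>set ss. wfT rk S {} s" and la: "rho q = deltaM M (Sym a ss)"
  shows "(qsem M q (Sym a ss) :: ('g, 'w) tr option) =
    Some (subst (the (rl M q a (map (deltaM M) ss))) (\<lambda>y. the (qsem M (fst y) (ss ! (snd y - 1)))))"
proof -
  let ?pl = "map (deltaM M) ss"
  have dlt: "map (dlt M undefined) ss = ?pl" by (simp add: deltaM_def)
  have "set ?pl \<subseteq> Ps M" using wf deltaM_in_Ps[OF dtla] by auto
  then obtain t where t: "rl M q a ?pl = Some t"
    using rl_exists[OF lau q a _ _ la[symmetric, unfolded deltaM_Sym]] len by auto
  have "(qsem M q (Sym a ss) :: ('g, 'w) tr option) = osubst t (\<lambda>y. if 0 < snd y \<and> snd y \<le> length ss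
      then qsem M (fst y) (ss ! (snd y - 1)) else None)"
    using t by (simp add: qsem_def dlt) (intro arg_cong[where f = "osubst t"] ext, auto simp: qsem_def)
  also have "\<dots> = Some (subst t (\<lambda>y. the (qsem M (fst y) (ss ! (snd y - 1)))))"
  proof (rule osubst_eq_Some)
    fix y assume "y \<in> set2_tr t"
    then have "fst y \<in> Qs M \<and> snd y \<in> {1..rk a} \<and> rho (fst y) = ?pl ! (snd y - 1)"
      by (rule rl_leaf[OF dtla lau t])
    with len have y: "fst y \<in> Qs M" "snd y \<in> {1..length ss}"
      "rho (fst y) = deltaM M (ss ! (snd y - 1))"
      by auto
    then have "(qsem M (fst y) (ss ! (snd y - 1)) :: ('g, 'w) tr option) \<noteq> None"
      using wf by (intro qsem_defined[OF lau]) auto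
    moreover have "0 < snd y \<and> snd y \<le> length ss" using y(2) by auto
    ultimately show "(if 0 < snd y \<and> snd y \<le> length ss then qsem M (fst y) (ss ! (snd y - 1)) else None)
        = Some (the (qsem M (fst y) (ss ! (snd y - 1)) :: ('g, 'w) tr option))"
      by simp
  qed
  finally show ?thesis using t by simp
qed

lemma subst_qsem_Sym:
  assumes dtla: "is_dtla rk S rkD D M" and lau: "la_uniform rk S M rho"
    and u: "\<forall>x\<in>set2_tr u. fst x \<in> Qs M \<and> rho (fst x) = deltaM M (Sym a ss)"
    and "a \<in> S" "length ss = rk a" "\<forall>s\<in>set ss. wfT rk S {} s"
  shows "subst u (\<lambda>x. the (qsem M (fst x) (Sym a ss))) =
    (subst (subst u (\<lambda>x. the (rl M (fst x) a (map (deltaM M) ss))))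
      (\<lambda>y. the (qsem M (fst y) (ss ! (snd y - 1)))) :: ('g, 'w) tr)"
  unfolding subst_subst
proof (rule subst_cong)
  fix x assume "x \<in> set2_tr u"
  with u have "(qsem M (fst x) (Sym a ss) :: ('g, 'w) tr option) =
    Some (subst (the (rl M (fst x) a (map (deltaM M) ss))) (\<lambda>y. the (qsem M (fst y) (ss ! (snd y - 1)))))"
    by (intro qsem_Sym[OF dtla lau _ assms(4-6)]) auto
  then show "the (qsem M (fst x) (Sym a ss) :: ('g, 'w) tr option) =
    subst (the (rl M (fst x) a (map (deltaM M) ss))) (\<lambda>y. the (qsem M (fst y) (ss ! (snd y - 1))))"
    by simp
qed

lemma rhsMphi_leaf:
  assumes dtla: "is_dtla rk S rkD D M" and lau: "la_uniform rk S M rho"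
    and phi: "\<forall>x\<in>set2_tr (phi q (dl M a ps)). fst x \<in> Qs M \<and> rho (fst x) = dl M a ps"
    and ps: "a \<in> S" "length ps = rk a" "set ps \<subseteq> Ps M"
    and y: "y \<in> set2_tr (rhsMphi M phi q a ps)"
  shows "fst y \<in> Qs M \<and> snd y \<in> {1..rk a} \<and> rho (fst y) = ps ! (snd y - 1)"
proof -
  from y obtain x where x: "x \<in> set2_tr (phi q (dl M a ps))" "y \<in> set2_tr (the (rl M (fst x) a ps))"
    unfolding rhsMphi_def set2_tr_subst by blast
  with phi obtain t where "rl M (fst x) a ps = Some t"
    using rl_exists[OF lau _ ps] by force
  with x(2) show ?thesis using rl_leaf[OF dtla lau] by simp
qed

lemma qevN_Sym:
  "wfT rkD D (QN N \<times> {1..length ss}) (rlN N q a) \<Longrightarrow>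
   qevN N hq q (Sym a ss) = subst (rlN N q a) (\<lambda>x. qevN N hq (fst x) (ss ! (snd x - 1)))"
  by (simp, rule subst_cong) (auto dest!: wfT_set2_tr)

text \<open>Plugging the translations of the i-th subtree into the leaves that condition (iv) keeps
  symbolic reproduces the substitution of all subtrees.\<close>
lemma subst_plug_qsem:
  fixes M :: "('f, 'g, 'q, 'p) dtla" and rho :: "'q \<Rightarrow> 'p"
  assumes "\<And>y. y \<in> set2_tr T \<Longrightarrow> snd y \<noteq> i \<Longrightarrow>
    (qsem M (fst y) (ss ! (snd y - 1)) :: ('g, 'q \<times> 'p) tr option) \<noteq> None"
  shows "subst (subst T (\<lambda>x. if snd x = i then Lf (fst x, rho (fst x))
                              else the (qsem M (fst x) (ss ! (snd x - 1)))))
           (\<lambda>y. the (qsem M (fst y) (ss ! (i - 1))))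
       = (subst T (\<lambda>x. the (qsem M (fst x) (ss ! (snd x - 1)))) :: ('g, 'w) tr)"
  unfolding subst_subst
proof (rule subst_cong)
  fix x assume x: "x \<in> set2_tr T"
  show "subst (if snd x = i then Lf (fst x, rho (fst x)) else the (qsem M (fst x) (ss ! (snd x - 1))))
          (\<lambda>y. the (qsem M (fst y) (ss ! (i - 1)))) = (the (qsem M (fst x) (ss ! (snd x - 1))) :: ('g, 'w) tr)"
  proof (cases "snd x = i")
    case False
    show ?thesis unfolding if_not_P[OF False] by (rule subst_the_qsem[OF assms[OF x False]])
  qed simp
qed

lemma transM_eq:
  fixes M :: "('f, 'g, 'q, 'p) dtla"
  assumes dtla: "is_dtla rk S rkD D M" and lau: "la_uniform rk S M rho" and s: "wfT rk S {} s"
  shows "transM M s = Some (subst (ax M (deltaM M s)) (\<lambda>x. the (qsem M (fst x) s)))"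
  unfolding transM_def semMc_def deltaM_def[symmetric] qsem_def[symmetric]
proof (rule osubst_eq_Some)
  fix x assume x: "x \<in> set2_tr (ax M (deltaM M s))"
  have "fst x \<in> Qs M \<and> rho (fst x) = deltaM M s"
    by (rule ax_leaf[OF dtla lau deltaM_in_Ps[OF dtla s] x])
  then have "(qsem M (fst x) s :: ('g, unit) tr option) \<noteq> None"
    by (intro qsem_defined[OF lau _ s]) auto
  then show "qsem M (fst x) s = Some (the (qsem M (fst x) s :: ('g, unit) tr option))" by simp
qed

section \<open>A dtop satisfying conditions (i) to (iv)\<close>

locale simulating_dtop =
  fixes rk :: "'f \<Rightarrow> nat" and S :: "'f set" and rkD :: "'g \<Rightarrow> nat" and D :: "'g set"
    and M :: "('f, 'g, 'q, 'p) dtla" and rho :: "'q \<Rightarrow> 'p"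
    and N :: "('f, 'g, 'r) dtop" and phi :: "'r \<Rightarrow> 'p \<Rightarrow> ('g, 'q \<times> 'p) tr"
  assumes dtla: "is_dtla rk S rkD D M" and lau: "la_uniform rk S M rho"
    and Ntot: "is_total_dtop rk S rkD D N"
    and phi_leaves: "\<forall>q\<in>QN N. \<forall>p\<in>Ps M.
        wfT rkD D {(qb, p) | qb. qb \<in> Qs M \<and> rho qb = p} (phi q p)"
    and cond_i: "Phi (axN N) = glb {Omega rho (ax M p) | p. p \<in> Ps M}"
    and cond_ii: "\<forall>v. \<forall>q\<in>QN N. \<forall>p\<in>Ps M.
        subt (axN N) v = Some (Lf (q, 0)) \<longrightarrow> subt (Omega rho (ax M p)) v = Some (phi q p)"
    and cond_iii: "\<forall>q\<in>QN N. \<forall>a\<in>S.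
        Phi (rlN N q a) = glb {Omega rho (rhsMphi M phi q a pl) | pl. length pl = rk a \<and> set pl \<subseteq> Ps M}"
    and cond_iv: "\<forall>q\<in>QN N. \<forall>qb\<in>QN N. \<forall>a\<in>S. \<forall>i\<in>{1..rk a}. \<forall>ss.
        length ss = rk a \<and> (\<forall>j\<in>{1..rk a}. j \<noteq> i \<longrightarrow> wfT rk S {} (ss ! (j - 1))) \<longrightarrow>
        (\<forall>p\<in>Ps M. \<forall>v\<in>Vbot (Phi (rlN N q a) :: ('g, unit) tr).
          subt (rlN N q a) v = Some (Lf (qb, i)) \<longrightarrow>
          subt (subst (rhsMphi M phi q a ((map (deltaM M) ss)[i - 1 := p]))
                  (\<lambda>x. if snd x = i then Lf (fst x, rho (fst x))
                       else the (qsem M (fst x) (ss ! (snd x - 1))))) v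
            = Some (phi qb p))"
begin

lemma phi_leaf:
  "q \<in> QN N \<Longrightarrow> p \<in> Ps M \<Longrightarrow> x \<in> set2_tr (phi q p) \<Longrightarrow> fst x \<in> Qs M \<and> rho (fst x) = p"
  using phi_leaves by (fastforce dest!: wfT_set2_tr)

lemma rhs_leaf_qsem_defined:
  assumes "q \<in> QN N" "a \<in> S" "length ss = rk a" "\<forall>s\<in>set ss. wfT rk S {} s"
    and "y \<in> set2_tr (rhsMphi M phi q a (map (deltaM M) ss))"
  shows "(qsem M (fst y) (ss ! (snd y - 1)) :: ('g, 'w) tr option) \<noteq> None"
proof -
  have pl: "length (map (deltaM M) ss) = rk a" "set (map (deltaM M) ss) \<subseteq> Ps M"
    using assms(3,4) deltaM_in_Ps[OF dtla] by auto
  with assms(2) have "dl M a (map (deltaM M) ss) \<in> Ps M"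
    using dtla unfolding is_dtla_def by blast
  with assms(1) have "\<forall>x\<in>set2_tr (phi q (dl M a (map (deltaM M) ss))).
      fst x \<in> Qs M \<and> rho (fst x) = dl M a (map (deltaM M) ss)"
    using phi_leaf by blast
  from rhsMphi_leaf[OF dtla lau this assms(2) pl assms(5)] assms(3,4)
  show ?thesis by (intro qsem_defined[OF lau]) auto
qed

text \<open>Condition (iv) and the translation of the i-th subtree determine the output of a
  rule of N at a leaf (qb, i).\<close>
lemma rhs_at_state_leaf:
  assumes q: "q \<in> QN N" and a: "a \<in> S" and len: "length ss = rk a"
    and wf: "\<forall>s\<in>set ss. wfT rk S {} s"
    and v: "subt (rlN N q a) v = Some (Lf (qb, i))" and qb: "qb \<in> QN N" and i: "i \<in> {1..rk a}"
    and IH: "(qevN N (\<lambda>_. Bot) qb (ss ! (i - 1)) :: ('g, unit) tr)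
      = subst (phi qb (deltaM M (ss ! (i - 1)))) (\<lambda>x. the (qsem M (fst x) (ss ! (i - 1))))"
  shows "subt (subst (rhsMphi M phi q a (map (deltaM M) ss)) (\<lambda>y. the (qsem M (fst y) (ss ! (snd y - 1))))) v
    = Some (qevN N (\<lambda>_. Bot) qb (ss ! (i - 1)) :: ('g, unit) tr)"
proof -
  define si where "si = ss ! (i - 1)"
  have i_lt: "i - 1 < length ss" using i len by auto
  then have si: "si \<in> set ss" unfolding si_def by simp
  define T where "T = rhsMphi M phi q a (map (deltaM M) ss)"
  let ?\<sigma> = "\<lambda>x. if snd x = i then Lf (fst x, rho (fst x)) else the (qsem M (fst x) (ss ! (snd x - 1)))"
  let ?\<tau> = "\<lambda>y. the (qsem M (fst y) si) :: ('g, unit) tr"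
  have "deltaM M si \<in> Ps M" using si wf deltaM_in_Ps[OF dtla] by blast
  with q qb a i len wf Vbot_Phi_if_leaf[OF v] v
  have "subt (subst (rhsMphi M phi q a ((map (deltaM M) ss)[i - 1 := deltaM M si])) ?\<sigma>) v
      = Some (phi qb (deltaM M si))"
    by (intro cond_iv[rule_format]) auto
  moreover have "(map (deltaM M) ss)[i - 1 := deltaM M si] = map (deltaM M) ss"
    unfolding si_def using i_lt by (metis list_update_id nth_map)
  ultimately have "subt (subst T ?\<sigma>) v = Some (phi qb (deltaM M si))"
    unfolding T_def by simp
  then have "subt (subst (subst T ?\<sigma>) ?\<tau>) v = Some (subst (phi qb (deltaM M si)) ?\<tau>)"
    by (rule subt_subst)
  moreover have "subst (subst T ?\<sigma>) ?\<tau> = subst T (\<lambda>y. the (qsem M (fst y) (ss ! (snd y - 1))))"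
    unfolding si_def
    by (rule subst_plug_qsem) (use rhs_leaf_qsem_defined[OF q a len wf] in \<open>simp add: T_def\<close>)
  ultimately show ?thesis using IH by (simp add: T_def si_def)
qed

lemma qevN_eq_subst_phi:
  "wfT rk S {} s \<Longrightarrow> q \<in> QN N \<Longrightarrow>
    (qevN N (\<lambda>_. Bot) q s :: ('g, unit) tr) = subst (phi q (deltaM M s)) (\<lambda>x. the (qsem M (fst x) s))"
proof (induction s arbitrary: q)
  case (Sym a ss)
  from Sym.prems have a: "a \<in> S" and len: "length ss = rk a" and wf: "\<forall>s\<in>set ss. wfT rk S {} s"
    by auto
  define T where "T = rhsMphi M phi q a (map (deltaM M) ss)"
  have R: "wfT rkD D (QN N \<times> {1..rk a}) (rlN N q a)"
    using Ntot Sym.prems(2) a unfolding is_total_dtop_def by blast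
  have "length (map (deltaM M) ss) = rk a \<and> set (map (deltaM M) ss) \<subseteq> Ps M"
    using len wf deltaM_in_Ps[OF dtla] by auto
  then have "Omega rho T \<in> {Omega rho (rhsMphi M phi q a pl) | pl. length pl = rk a \<and> set pl \<subseteq> Ps M}"
    unfolding T_def by blast
  with cond_iii Sym.prems(2) a have le: "le_tr (Phi (rlN N q a)) (Omega rho T)"
    by (simp add: glb_lower)
  have "(qevN N (\<lambda>_. Bot) q (Sym a ss) :: ('g, unit) tr)
      = subst (rlN N q a) (\<lambda>x. qevN N (\<lambda>_. Bot) (fst x) (ss ! (snd x - 1)))"
    by (rule qevN_Sym) (use R len in simp)
  also have "\<dots> = subst T (\<lambda>y. the (qsem M (fst y) (ss ! (snd y - 1))))"
  proof (rule subst_eq_if_Phi_le_Omega[OF R le])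
    fix v x
    assume v: "subt (rlN N q a) v = Some (Lf x)"
    then have "x \<in> set2_tr (rlN N q a)" unfolding occurs_iff_set2_tr[symmetric] occurs_def by blast
    with R obtain qb i where x: "x = (qb, i)" and qb: "qb \<in> QN N" and i: "i \<in> {1..rk a}"
      by (auto dest!: wfT_set2_tr)
    have "ss ! (i - 1) \<in> set ss" using i len by (intro nth_mem) auto
    with Sym.IH wf qb have "(qevN N (\<lambda>_. Bot) qb (ss ! (i - 1)) :: ('g, unit) tr)
        = subst (phi qb (deltaM M (ss ! (i - 1)))) (\<lambda>x. the (qsem M (fst x) (ss ! (i - 1))))"
      by blast
    from rhs_at_state_leaf[OF Sym.prems(2) a len wf v[unfolded x] qb i this]
    show "subt (subst T (\<lambda>y. the (qsem M (fst y) (ss ! (snd y - 1))))) v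
        = Some (qevN N (\<lambda>_. Bot) (fst x) (ss ! (snd x - 1)) :: ('g, unit) tr)"
      by (simp add: T_def x)
  qed
  also have "\<dots> = subst (phi q (deltaM M (Sym a ss))) (\<lambda>x. the (qsem M (fst x) (Sym a ss)))"
  proof -
    have "deltaM M (Sym a ss) \<in> Ps M" by (rule deltaM_in_Ps[OF dtla Sym.prems(1)])
    with Sym.prems(2) phi_leaf show ?thesis
      unfolding T_def rhsMphi_def deltaM_Sym
      by (intro subst_qsem_Sym[symmetric, OF dtla lau _ a len wf]) auto
  qed
  finally show ?case .
qed simp_all

lemma transN_eq_transM:
  assumes s: "wfT rk S {} s"
  shows "transN N s = transM M s"
proof -
  define p where "p = deltaM M s"
  have p: "p \<in> Ps M" unfolding p_def by (rule deltaM_in_Ps[OF dtla s])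
  have A: "wfT rkD D (QN N \<times> {0}) (axN N)" using Ntot unfolding is_total_dtop_def by blast
  have le: "le_tr (Phi (axN N)) (Omega rho (ax M p))"
    unfolding cond_i using p by (auto intro: glb_lower)
  have "subst (axN N) (\<lambda>x. qevN N (\<lambda>_. Bot) (fst x) s) =
    (subst (ax M p) (\<lambda>x. the (qsem M (fst x) s)) :: ('g, unit) tr)"
  proof (rule subst_eq_if_Phi_le_Omega[OF A le])
    fix v x
    assume v: "subt (axN N) v = Some (Lf x)"
    then have "x \<in> set2_tr (axN N)" unfolding occurs_iff_set2_tr[symmetric] occurs_def by blast
    with A obtain q where x: "x = (q, 0)" and q: "q \<in> QN N" by (auto dest!: wfT_set2_tr)
    with cond_ii v p have "subt (Omega rho (ax M p)) v = Some (phi q p)" by blast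
    then have "subt (subst (Omega rho (ax M p)) (\<lambda>y. the (qsem M (fst y) s))) v
        = Some (subst (phi q p) (\<lambda>y. the (qsem M (fst y) s)))"
      by (rule subt_subst)
    then show "subt (subst (ax M p) (\<lambda>x. the (qsem M (fst x) s))) v
        = Some (qevN N (\<lambda>_. Bot) (fst x) s :: ('g, unit) tr)"
      using qevN_eq_subst_phi[OF s q] by (simp add: Omega_def subst_subst x p_def)
  qed
  then show ?thesis
    by (simp add: transN_def semNc_def transM_eq[OF dtla lau s] p_def)
qed

end

theorem mainTheorem11:
  fixes rk :: "'f \<Rightarrow> nat" and S :: "'f set"
    and rkD :: "'g \<Rightarrow> nat" and D :: "'g set"
    and M :: "('f, 'g, 'q, 'p) dtla" and rho :: "'q \<Rightarrow> 'p"
    and ps :: "'p list"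
    and N :: "('f, 'g, ('g, 'q \<times> 'p) tr list) dtop"
    and phi :: "('g, 'q \<times> 'p) tr list \<Rightarrow> 'p \<Rightarrow> ('g, 'q \<times> 'p) tr"
  assumes alphS: "finite S" and alphD: "finite D"
    and canon: "canonical rk S rkD D M rho"
    and dtpla: "is_dtpla rk S rkD D M"
    and enum: "distinct ps" "set ps = Ps M"
    and Ntot: "is_total_dtop rk S rkD D N"
    and Nreach: "all_reachableN rk S N"
    and QNsub: "\<forall>q\<in>QN N. length q = length ps \<and> (\<forall>t\<in>set q. wfT rkD D (Qs M \<times> Ps M) t)"
    and phi_def: "\<forall>q\<in>QN N. \<forall>i<length ps. phi q (ps ! i) = q ! i"
    and phi_leaves: "\<forall>q\<in>QN N. \<forall>p\<in>Ps M.
        wfT rkD D {(qb, p) | qb. qb \<in> Qs M \<and> rho qb = p} (phi q p)"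
    and cond_i: "Phi (axN N) = glb {Omega rho (ax M p) | p. p \<in> Ps M}"
    and cond_ii: "\<forall>v. \<forall>q\<in>QN N. \<forall>p\<in>Ps M.
        subt (axN N) v = Some (Lf (q, 0)) \<longrightarrow> subt (Omega rho (ax M p)) v = Some (phi q p)"
    and cond_iii: "\<forall>q\<in>QN N. \<forall>a\<in>S.
        Phi (rlN N q a) = glb {Omega rho (rhsMphi M phi q a pl) | pl. length pl = rk a \<and> set pl \<subseteq> Ps M}"
    and cond_iv: "\<forall>q\<in>QN N. \<forall>qb\<in>QN N. \<forall>a\<in>S. \<forall>i\<in>{1..rk a}. \<forall>ss.
        length ss = rk a \<and> (\<forall>j\<in>{1..rk a}. j \<noteq> i \<longrightarrow> wfT rk S {} (ss ! (j - 1))) \<longrightarrow>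
        (\<forall>p\<in>Ps M. \<forall>v\<in>Vbot (Phi (rlN N q a) :: ('g, unit) tr).
          subt (rlN N q a) v = Some (Lf (qb, i)) \<longrightarrow>
          subt (subst (rhsMphi M phi q a ((map (deltaM M) ss)[i - 1 := p]))
                  (\<lambda>x. if snd x = i then Lf (fst x, rho (fst x))
                       else the (qsem M (fst x) (ss ! (snd x - 1))))) v
            = Some (phi qb p))"
  shows "\<forall>s. wfT rk S {} s \<longrightarrow> transN N s = transM M s"
proof -
  from canon have "is_dtla rk S rkD D M" "la_uniform rk S M rho"
    unfolding canonical_def by auto
  then interpret simulating_dtop rk S rkD D M rho N phi
    using Ntot phi_leaves cond_i cond_ii cond_iii cond_iv by unfold_locales
  show ?thesis using transN_eq_transM by blast
qed

end
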